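(* Let $K$ be a field of characteristic $0$, let $S=K[x_1,\ldots,x_n]$ be graded by $\deg x_i=a_i>0$, and let $I\subset S$ be a homogeneous ideal. Suppose that $(I^{(k-1)})^2\subseteq I^k$ for some $k\ge2$. Then every homogeneous ideal $J$ with $I^k\subseteq J\subseteq I^{(k)}$ is strongly Golod, i.e. $\partial(J)^2\subseteq J$, where $\partial(J)$ is the ideal generated by all $\partial f/\partial x_i$ with $f\in J$, $1\le i\le n$. In particular, any homogeneous ideal $J$ with $I^2\subseteq J\subseteq I^{(2)}$ is strongly Golod.
   Context: The $m$-th symbolic power is $I^{(m)}=\bigcup_{t\ge1} I^m:L^t$, where $L$ is the intersection of all associated, non-minimal prime ideals of $I^m$. *)

theory Defs
  imports Main "HOL-Library.Poly_Mapping"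
begin

text \<open>Multivariate polynomial ring S = K[x_i | i :: 'n] with variables indexed by a
  finite type 'n (so n = CARD('n)): a polynomial is a finitely supported map to coefficients
  from monomials.\<close>

type_synonym ('n, 'a) mpoly = "('n \<Rightarrow>\<^sub>0 nat) \<Rightarrow>\<^sub>0 'a"

definition is_ideal :: "'r::comm_ring_1 set \<Rightarrow> bool" where
  "is_ideal I \<longleftrightarrow> 0 \<in> I \<and> (\<forall>x\<in>I. \<forall>y\<in>I. x + y \<in> I) \<and> (\<forall>r. \<forall>x\<in>I. r * x \<in> I)"

definition ideal_gen :: "'r::comm_ring_1 set \<Rightarrow> 'r set" where
  "ideal_gen G = \<Inter>{I. is_ideal I \<and> G \<subseteq> I}"

definition ideal_prod :: "'r::comm_ring_1 set \<Rightarrow> 'r set \<Rightarrow> 'r set" where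
  "ideal_prod I J = ideal_gen {x * y | x y. x \<in> I \<and> y \<in> J}"

fun ideal_pow :: "'r::comm_ring_1 set \<Rightarrow> nat \<Rightarrow> 'r set" where
  "ideal_pow I 0 = UNIV"
| "ideal_pow I (Suc k) = ideal_prod I (ideal_pow I k)"

definition ideal_colon :: "'r::comm_ring_1 set \<Rightarrow> 'r set \<Rightarrow> 'r set" where
  "ideal_colon I J = {f. \<forall>g\<in>J. f * g \<in> I}"

definition prime_ideal :: "'r::comm_ring_1 set \<Rightarrow> bool" where
  "prime_ideal P \<longleftrightarrow> is_ideal P \<and> P \<noteq> UNIV \<and> (\<forall>x y. x * y \<in> P \<longrightarrow> x \<in> P \<or> y \<in> P)"

definition associated_prime :: "'r::comm_ring_1 set \<Rightarrow> 'r set \<Rightarrow> bool" where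
  "associated_prime I P \<longleftrightarrow> prime_ideal P \<and> (\<exists>f. P = ideal_colon I {f})"

definition embedded_prime :: "'r::comm_ring_1 set \<Rightarrow> 'r set \<Rightarrow> bool" where
  "embedded_prime I P \<longleftrightarrow> associated_prime I P \<and> (\<exists>Q. associated_prime I Q \<and> Q \<subset> P)"

text \<open>m-th symbolic power: union over t \<ge> 1 of I^m : L^t, L = intersection of the
  associated, non-minimal primes of I^m (empty intersection = whole ring).\<close>
definition symbolic_power :: "'r::comm_ring_1 set \<Rightarrow> nat \<Rightarrow> 'r set" where
  "symbolic_power I m =
     (let L = \<Inter>{P. embedded_prime (ideal_pow I m) P}
      in \<Union>t\<in>{1..}. ideal_colon (ideal_pow I m) (ideal_pow L t))"

definition wdeg :: "('n::finite \<Rightarrow> nat) \<Rightarrow> ('n \<Rightarrow>\<^sub>0 nat) \<Rightarrow> nat" where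
  "wdeg a m = (\<Sum>i\<in>UNIV. a i * Poly_Mapping.lookup m i)"

definition homogeneous :: "('n::finite \<Rightarrow> nat) \<Rightarrow> ('n, 'a::zero) mpoly \<Rightarrow> bool" where
  "homogeneous a f \<longleftrightarrow> (\<forall>m\<in>Poly_Mapping.keys f. \<forall>m'\<in>Poly_Mapping.keys f. wdeg a m = wdeg a m')"

definition homogeneous_ideal :: "('n::finite \<Rightarrow> nat) \<Rightarrow> ('n, 'a::comm_ring_1) mpoly set \<Rightarrow> bool" where
  "homogeneous_ideal a I \<longleftrightarrow> is_ideal I \<and> I = ideal_gen {f\<in>I. homogeneous a f}"

definition pderiv_var :: "'n \<Rightarrow> ('n, 'a::comm_semiring_1) mpoly \<Rightarrow> ('n, 'a) mpoly" where
  "pderiv_var i f = Abs_poly_mapping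
     (\<lambda>m. of_nat (Poly_Mapping.lookup m i + 1) * Poly_Mapping.lookup f (m + Poly_Mapping.single i 1))"

definition deriv_ideal :: "('n, 'a::comm_ring_1) mpoly set \<Rightarrow> ('n, 'a) mpoly set" where
  "deriv_ideal J = ideal_gen {pderiv_var i f | i f. f \<in> J}"

definition strongly_golod :: "('n, 'a::comm_ring_1) mpoly set \<Rightarrow> bool" where
  "strongly_golod J \<longleftrightarrow> ideal_pow (deriv_ideal J) 2 \<subseteq> J"

end

theory Submission
  imports Defs Complex_Main
begin

text \<open>
  A derivation \<open>d\<close> maps \<open>I\<^sup>m\<^sup>+\<^sup>1\<close> into \<open>I\<^sup>m\<close> by the Leibniz rule, and the same holds for
  symbolic powers over a Noetherian ring. Let \<open>L\<^sub>m\<close> be the intersection of the embedded primes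
  of \<open>I\<^sup>m\<close>. If \<open>f L\<^sub>m\<^sub>+\<^sub>1\<^sup>t \<subseteq> I\<^sup>m\<^sup>+\<^sup>1\<close>, Leibniz gives \<open>(d f) L\<^sub>m\<^sub>+\<^sub>1\<^sup>2\<^sup>t \<subseteq> I\<^sup>m\<close>. Comparing
  associated primes of \<open>I\<^sup>m\<close> and \<open>I\<^sup>m\<^sup>+\<^sup>1\<close>, which all contain \<open>I\<close>, one finds that every prime
  containing \<open>I\<^sup>m : d f\<close> contains \<open>L\<^sub>m\<close>, so some power of \<open>L\<^sub>m\<close> multiplies \<open>d f\<close> into \<open>I\<^sup>m\<close>,
  i.e. \<open>d f \<in> I\<^sup>(\<^sup>m\<^sup>)\<close>.

  The polynomial ring is Noetherian (leading monomials and Dickson's lemma), and partial derivatives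
  are derivations, so \<open>\<partial>J \<subseteq> \<partial>I\<^sup>(\<^sup>k\<^sup>) \<subseteq> I\<^sup>(\<^sup>k\<^sup>-\<^sup>1\<^sup>)\<close> and
  \<open>(\<partial>J)\<^sup>2 \<subseteq> (I\<^sup>(\<^sup>k\<^sup>-\<^sup>1\<^sup>))\<^sup>2 \<subseteq> I\<^sup>k \<subseteq> J\<close>.
\<close>

section \<open>Ideals\<close>

context
  fixes I :: "'r::comm_ring_1 set"
  assumes I: "is_ideal I"
begin

lemma is_ideal_zero: "0 \<in> I"
  using I by (simp add: is_ideal_def)

lemma is_ideal_add: "x \<in> I \<Longrightarrow> y \<in> I \<Longrightarrow> x + y \<in> I"
  using I by (simp add: is_ideal_def)

lemma is_ideal_mult_left: "x \<in> I \<Longrightarrow> r * x \<in> I"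
  using I by (simp add: is_ideal_def)

lemma is_ideal_mult_right: "x \<in> I \<Longrightarrow> x * r \<in> I"
  by (metis is_ideal_mult_left mult.commute)

lemma is_ideal_diff: "x \<in> I \<Longrightarrow> y \<in> I \<Longrightarrow> x - y \<in> I"
  using is_ideal_add[of x "-1 * y"] is_ideal_mult_left[of y "-1"] by simp

lemma is_ideal_one_imp_UNIV: "1 \<in> I \<Longrightarrow> I = UNIV"
  using is_ideal_mult_left[of 1] by auto

end

lemma is_ideal_UNIV: "is_ideal UNIV"
  by (simp add: is_ideal_def)

lemma is_ideal_Inter: "(\<And>X. X \<in> F \<Longrightarrow> is_ideal X) \<Longrightarrow> is_ideal (\<Inter>F)"
  by (simp add: is_ideal_def)

lemma is_ideal_ideal_gen: "is_ideal (ideal_gen G)"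
  unfolding ideal_gen_def by (rule is_ideal_Inter) simp

lemma ideal_gen_subset: "G \<subseteq> ideal_gen G"
  unfolding ideal_gen_def by blast

lemma ideal_gen_least: "is_ideal I \<Longrightarrow> G \<subseteq> I \<Longrightarrow> ideal_gen G \<subseteq> I"
  unfolding ideal_gen_def by blast

definition ideal_insert :: "'r::comm_ring_1 set \<Rightarrow> 'r \<Rightarrow> 'r set" where
  "ideal_insert I c = {x + r * c | x r. x \<in> I}"

lemma mem_ideal_insert_iff: "y \<in> ideal_insert I c \<longleftrightarrow> (\<exists>x r. y = x + r * c \<and> x \<in> I)"
  unfolding ideal_insert_def by blast

lemma is_ideal_ideal_insert:
  assumes "is_ideal I"
  shows "is_ideal (ideal_insert I c)"
  unfolding is_ideal_def
proof (intro conjI ballI allI)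
  show "0 \<in> ideal_insert I c"
    unfolding mem_ideal_insert_iff using is_ideal_zero[OF assms] by (metis add_0 mult_zero_left)
next
  fix y z assume "y \<in> ideal_insert I c" "z \<in> ideal_insert I c"
  then obtain x1 r1 x2 r2 where "y = x1 + r1 * c" "z = x2 + r2 * c" "x1 \<in> I" "x2 \<in> I"
    unfolding mem_ideal_insert_iff by blast
  then have "y + z = (x1 + x2) + (r1 + r2) * c" "x1 + x2 \<in> I"
    by (simp_all add: algebra_simps is_ideal_add[OF assms])
  then show "y + z \<in> ideal_insert I c" unfolding mem_ideal_insert_iff by blast
next
  fix s y assume "y \<in> ideal_insert I c"
  then obtain x1 r1 where "y = x1 + r1 * c" "x1 \<in> I" unfolding mem_ideal_insert_iff by blast
  then have "s * y = s * x1 + (s * r1) * c" "s * x1 \<in> I"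
    by (simp_all add: algebra_simps is_ideal_mult_left[OF assms])
  then show "s * y \<in> ideal_insert I c" unfolding mem_ideal_insert_iff by blast
qed

lemma subset_ideal_insert: "I \<subseteq> ideal_insert I c"
  unfolding mem_ideal_insert_iff subset_iff by (metis add_0_right mult_zero_left)

lemma mem_ideal_insert: "is_ideal I \<Longrightarrow> c \<in> ideal_insert I c"
  unfolding mem_ideal_insert_iff by (metis add_0 is_ideal_zero mult_1)

lemma is_ideal_ideal_prod: "is_ideal (ideal_prod I J)"
  unfolding ideal_prod_def by (rule is_ideal_ideal_gen)

lemma mult_mem_ideal_prod: "x \<in> I \<Longrightarrow> y \<in> J \<Longrightarrow> x * y \<in> ideal_prod I J"
  unfolding ideal_prod_def by (rule subsetD[OF ideal_gen_subset]) blast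

lemma ideal_prod_least:
  "is_ideal K \<Longrightarrow> (\<And>x y. x \<in> I \<Longrightarrow> y \<in> J \<Longrightarrow> x * y \<in> K) \<Longrightarrow> ideal_prod I J \<subseteq> K"
  unfolding ideal_prod_def by (rule ideal_gen_least) auto

lemma ideal_prod_mono: "I \<subseteq> I' \<Longrightarrow> J \<subseteq> J' \<Longrightarrow> ideal_prod I J \<subseteq> ideal_prod I' J'"
  by (rule ideal_prod_least[OF is_ideal_ideal_prod]) (auto intro: mult_mem_ideal_prod)

lemma ideal_prod_UNIV_right: "is_ideal I \<Longrightarrow> ideal_prod I UNIV = I"
  using ideal_prod_least[of I I UNIV] mult_mem_ideal_prod[of _ I 1 UNIV]
  by (auto intro: is_ideal_mult_right)

lemma ideal_prod_assoc_subset: "ideal_prod I (ideal_prod J K) \<subseteq> ideal_prod (ideal_prod I J) K"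
proof (rule ideal_prod_least[OF is_ideal_ideal_prod])
  fix x z assume x: "x \<in> I" and z: "z \<in> ideal_prod J K"
  let ?M = "{z. x * z \<in> ideal_prod (ideal_prod I J) K}"
  have "is_ideal ?M"
    using is_ideal_ideal_prod[of "ideal_prod I J" K]
    by (auto simp: is_ideal_def distrib_left mult.left_commute)
  then have "ideal_prod J K \<subseteq> ?M"
    by (rule ideal_prod_least) (auto simp: mult.assoc[symmetric] intro!: mult_mem_ideal_prod x)
  then show "x * z \<in> ideal_prod (ideal_prod I J) K" using z by blast
qed

lemma is_ideal_ideal_pow: "is_ideal (ideal_pow I k)"
  by (cases k) (simp_all add: is_ideal_UNIV is_ideal_ideal_prod)

lemma ideal_pow_one: "is_ideal I \<Longrightarrow> ideal_pow I 1 = I"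
  by (simp add: ideal_prod_UNIV_right)

lemma ideal_pow_mono: "I \<subseteq> J \<Longrightarrow> ideal_pow I k \<subseteq> ideal_pow J k"
  by (induction k) (auto intro: ideal_prod_mono[THEN subsetD])

lemma ideal_pow_Suc_subset: "is_ideal I \<Longrightarrow> ideal_pow I (Suc k) \<subseteq> ideal_pow I k"
  by (induction k) (simp_all add: ideal_prod_mono)

lemma ideal_pow_antimono:
  assumes "is_ideal I" and "j \<le> k"
  shows "ideal_pow I k \<subseteq> ideal_pow I j"
  using assms(2) by (induction k rule: dec_induct) (use ideal_pow_Suc_subset[OF assms(1)] in blast)+

lemma power_mem_ideal_pow: "x \<in> I \<Longrightarrow> x ^ n \<in> ideal_pow I n"
  by (induction n) (auto intro: mult_mem_ideal_prod)

lemma ideal_pow_add_subset: "ideal_pow I (j + k) \<subseteq> ideal_prod (ideal_pow I j) (ideal_pow I k)"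
proof (induction j)
  case 0
  show ?case using mult_mem_ideal_prod[of 1 UNIV _ "ideal_pow I k"] by auto
next
  case (Suc j)
  have "ideal_pow I (Suc j + k) \<subseteq> ideal_prod I (ideal_prod (ideal_pow I j) (ideal_pow I k))"
    using Suc by (simp add: ideal_prod_mono)
  also have "\<dots> \<subseteq> ideal_prod (ideal_pow I (Suc j)) (ideal_pow I k)"
    by (simp add: ideal_prod_assoc_subset)
  finally show ?case .
qed

lemma is_ideal_colon: "is_ideal I \<Longrightarrow> is_ideal (ideal_colon I J)"
  unfolding ideal_colon_def is_ideal_def by (auto simp: distrib_right mult.assoc)

lemma ideal_colon_antimono: "J \<subseteq> J' \<Longrightarrow> ideal_colon I J' \<subseteq> ideal_colon I J"
  unfolding ideal_colon_def by auto

lemma subset_ideal_colon: "is_ideal I \<Longrightarrow> I \<subseteq> ideal_colon I J"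
  unfolding ideal_colon_def by (auto intro: is_ideal_mult_right)

lemma mem_ideal_colon_singleton: "y \<in> ideal_colon I {x} \<longleftrightarrow> y * x \<in> I"
  unfolding ideal_colon_def by auto

lemma ideal_colon_singleton_mult:
  "is_ideal I \<Longrightarrow> ideal_colon I {x} \<subseteq> ideal_colon I {x * u}"
  by (auto simp: mem_ideal_colon_singleton mult.assoc[symmetric] intro: is_ideal_mult_right)

lemma ideal_colon_one: "is_ideal I \<Longrightarrow> ideal_colon I {1} = I"
  by (auto simp: mem_ideal_colon_singleton)

lemma mem_ideal_colon_iff_subset: "x \<in> ideal_colon I J \<longleftrightarrow> J \<subseteq> ideal_colon I {x}"
  by (auto simp: ideal_colon_def mult.commute)

lemma mem_ideal_colon_ideal_prod:
  assumes "is_ideal C" and "\<And>a b. a \<in> X \<Longrightarrow> b \<in> Y \<Longrightarrow> x * (a * b) \<in> C"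
  shows "x \<in> ideal_colon C (ideal_prod X Y)"
  unfolding mem_ideal_colon_iff_subset
  using assms by (intro ideal_prod_least is_ideal_colon) (simp_all add: mem_ideal_colon_singleton mult.commute)

lemma prime_idealD: "prime_ideal P \<Longrightarrow> x * y \<in> P \<Longrightarrow> x \<in> P \<or> y \<in> P"
  unfolding prime_ideal_def by blast

lemma prime_ideal_is_ideal: "prime_ideal P \<Longrightarrow> is_ideal P"
  unfolding prime_ideal_def by blast

lemma one_not_mem_prime_ideal: "prime_ideal P \<Longrightarrow> 1 \<notin> P"
  unfolding prime_ideal_def using is_ideal_one_imp_UNIV by blast

lemma prime_ideal_power_mem: "prime_ideal P \<Longrightarrow> x ^ n \<in> P \<Longrightarrow> x \<in> P"
  by (induction n) (auto dest: prime_idealD one_not_mem_prime_ideal)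

lemma prime_ideal_ideal_pow_subset:
  "prime_ideal P \<Longrightarrow> ideal_pow I n \<subseteq> P \<Longrightarrow> I \<subseteq> P"
  using power_mem_ideal_pow[of _ I n] prime_ideal_power_mem[of P] by blast

lemma prod_not_mem_prime_ideal:
  assumes "prime_ideal P" and "finite S" and "\<And>s. s \<in> S \<Longrightarrow> g s \<notin> P"
  shows "prod g S \<notin> P"
  using assms(2,3)
  by (induction S rule: finite_induct)
    (auto dest: prime_idealD[OF assms(1)] simp: one_not_mem_prime_ideal[OF assms(1)])

lemma prime_ideal_Inter_subsetD:
  assumes P: "prime_ideal P" and "finite S"
    and absorb: "\<And>X x c. X \<in> S \<Longrightarrow> x \<in> X \<Longrightarrow> c * x \<in> X" and "\<Inter>S \<subseteq> P"
  shows "\<exists>X\<in>S. X \<subseteq> P"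
proof (rule ccontr)
  assume "\<not> (\<exists>X\<in>S. X \<subseteq> P)"
  then have "\<forall>X\<in>S. \<exists>x. x \<in> X \<and> x \<notin> P" by blast
  then obtain g where g: "\<And>X. X \<in> S \<Longrightarrow> g X \<in> X \<and> g X \<notin> P" by metis
  have "prod g S \<in> X" if X: "X \<in> S" for X
  proof -
    have "prod g S = prod g (S - {X}) * g X"
      using \<open>finite S\<close> X by (simp add: prod.remove mult.commute)
    also have "\<dots> \<in> X" using absorb X g by blast
    finally show ?thesis .
  qed
  then have "prod g S \<in> P" using \<open>\<Inter>S \<subseteq> P\<close> by blast
  moreover have "prod g S \<notin> P" using prod_not_mem_prime_ideal[OF P \<open>finite S\<close>] g by blast
  ultimately show False by contradiction
qed

definition irreducible_ideal :: "'r::comm_ring_1 set \<Rightarrow> bool" where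
  "irreducible_ideal Q \<longleftrightarrow> is_ideal Q \<and> Q \<noteq> UNIV \<and>
     (\<forall>X Y. is_ideal X \<and> is_ideal Y \<and> Q = X \<inter> Y \<longrightarrow> Q = X \<or> Q = Y)"

definition radical :: "'r::comm_ring_1 set \<Rightarrow> 'r set" where
  "radical Q = {z. \<exists>n. z ^ n \<in> Q}"

lemma radical_mult_left: "is_ideal Q \<Longrightarrow> z \<in> radical Q \<Longrightarrow> c * z \<in> radical Q"
  unfolding radical_def by (auto simp: power_mult_distrib intro: is_ideal_mult_left)

lemma ex_power_mem_all_radical:
  assumes "finite G" and "\<And>Q. Q \<in> G \<Longrightarrow> is_ideal Q" and "\<And>Q. Q \<in> G \<Longrightarrow> z \<in> radical Q"
  shows "\<exists>N. \<forall>Q\<in>G. z ^ N \<in> Q"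
  using assms
proof (induction G rule: finite_induct)
  case (insert Q G)
  then obtain N where N: "\<forall>Q'\<in>G. z ^ N \<in> Q'" by auto
  obtain n where n: "z ^ n \<in> Q" using insert.prems unfolding radical_def by auto
  have "z ^ (N + n) \<in> Q'" if "Q' \<in> insert Q G" for Q'
    using that N n insert.prems(1)[OF that]
    by (auto simp: power_add intro: is_ideal_mult_left is_ideal_mult_right)
  then show ?case by blast
qed simp

abbreviation embedded_locus :: "'r::comm_ring_1 set \<Rightarrow> 'r set" where
  "embedded_locus X \<equiv> \<Inter>{P. embedded_prime X P}"

lemma is_ideal_embedded_locus: "is_ideal (embedded_locus X)"
  by (rule is_ideal_Inter)
    (auto simp: embedded_prime_def associated_prime_def intro: prime_ideal_is_ideal)

lemma mem_symbolic_power_iff: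
  "f \<in> symbolic_power I m \<longleftrightarrow>
     (\<exists>t\<ge>1. f \<in> ideal_colon (ideal_pow I m) (ideal_pow (embedded_locus (ideal_pow I m)) t))"
  unfolding symbolic_power_def Let_def by auto

lemma symbolic_power_0: "symbolic_power I 0 = UNIV"
  by (auto simp: mem_symbolic_power_iff ideal_colon_def)

lemma is_ideal_symbolic_power:
  assumes "is_ideal I"
  shows "is_ideal (symbolic_power I m)"
proof -
  let ?A = "ideal_pow I m" and ?L = "embedded_locus (ideal_pow I m)"
  have A: "is_ideal (ideal_colon ?A (ideal_pow ?L t))" for t
    by (rule is_ideal_colon[OF is_ideal_ideal_pow])
  have mono: "ideal_colon ?A (ideal_pow ?L t) \<subseteq> ideal_colon ?A (ideal_pow ?L (t + t'))" for t t'
    by (rule ideal_colon_antimono[OF ideal_pow_antimono[OF is_ideal_embedded_locus]]) simp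
  show ?thesis unfolding is_ideal_def
  proof (intro conjI ballI allI)
    show "0 \<in> symbolic_power I m"
      unfolding mem_symbolic_power_iff using is_ideal_zero[OF A] by blast
  next
    fix x y assume "x \<in> symbolic_power I m" "y \<in> symbolic_power I m"
    then obtain s t where "s \<ge> 1" "x \<in> ideal_colon ?A (ideal_pow ?L s)" "y \<in> ideal_colon ?A (ideal_pow ?L t)"
      unfolding mem_symbolic_power_iff by blast
    then have "s + t \<ge> 1" "x + y \<in> ideal_colon ?A (ideal_pow ?L (s + t))"
      using mono[of s t] mono[of t s] by (auto simp: add.commute intro!: is_ideal_add[OF A])
    then show "x + y \<in> symbolic_power I m" unfolding mem_symbolic_power_iff by blast
  next
    fix r x assume "x \<in> symbolic_power I m"
    then show "r * x \<in> symbolic_power I m"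
      unfolding mem_symbolic_power_iff using is_ideal_mult_left[OF A] by blast
  qed
qed

section \<open>Derivations\<close>

definition derivation :: "('r::comm_ring_1 \<Rightarrow> 'r) \<Rightarrow> bool" where
  "derivation d \<longleftrightarrow> (\<forall>x y. d (x + y) = d x + d y) \<and> (\<forall>x y. d (x * y) = d x * y + x * d y)"

context
  fixes d :: "'r::comm_ring_1 \<Rightarrow> 'r"
  assumes d: "derivation d"
begin

lemma derivation_add: "d (x + y) = d x + d y"
  using d by (simp add: derivation_def)

lemma derivation_mult: "d (x * y) = d x * y + x * d y"
  using d by (simp add: derivation_def)

lemma derivation_zero: "d 0 = 0"
  using derivation_add[of 0 0] by simp

lemma derivation_mem_ideal_prod:
  assumes Y: "is_ideal Y" and Z: "is_ideal Z" and "Y \<subseteq> Z"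
    and XY: "\<And>x y. x \<in> X \<Longrightarrow> y \<in> Y \<Longrightarrow> x * d y \<in> Z"
    and f: "f \<in> ideal_prod X Y"
  shows "d f \<in> Z"
proof -
  let ?K = "{f \<in> Y. d f \<in> Z}"
  have "is_ideal ?K" unfolding is_ideal_def
  proof (intro conjI ballI allI)
    show "0 \<in> ?K" using is_ideal_zero[OF Y] is_ideal_zero[OF Z] by (simp add: derivation_zero)
  next
    fix x y assume "x \<in> ?K" "y \<in> ?K"
    then show "x + y \<in> ?K" by (simp add: derivation_add is_ideal_add[OF Y] is_ideal_add[OF Z])
  next
    fix r x assume "x \<in> ?K"
    then have "x \<in> Z" using \<open>Y \<subseteq> Z\<close> by blast
    with \<open>x \<in> ?K\<close> show "r * x \<in> ?K"
      by (simp add: derivation_mult is_ideal_mult_left[OF Y] is_ideal_add[OF Z] is_ideal_mult_left[OF Z])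
  qed
  moreover have "x * y \<in> ?K" if "x \<in> X" "y \<in> Y" for x y
  proof -
    have "d x * y \<in> Z" using \<open>Y \<subseteq> Z\<close> that is_ideal_mult_left[OF Z] by blast
    then show ?thesis
      using that XY by (simp add: derivation_mult is_ideal_add[OF Z] is_ideal_mult_left[OF Y])
  qed
  ultimately have "ideal_prod X Y \<subseteq> ?K" by (rule ideal_prod_least)
  then show ?thesis using f by blast
qed

lemma derivation_mem_ideal_pow: "f \<in> ideal_pow I (Suc j) \<Longrightarrow> d f \<in> ideal_pow I j"
proof (induction j arbitrary: f)
  case (Suc j)
  show ?case
  proof (rule derivation_mem_ideal_prod[OF is_ideal_ideal_pow is_ideal_ideal_pow order.refl])
    show "x * d y \<in> ideal_pow I (Suc j)" if "x \<in> I" "y \<in> ideal_pow I (Suc j)" for x y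
      using that Suc.IH by (simp add: mult_mem_ideal_prod)
    show "f \<in> ideal_prod I (ideal_pow I (Suc j))" using Suc.prems by simp
  qed
qed simp

end

section \<open>Noetherian rings\<close>

definition noetherian_ring :: "'r::comm_ring_1 itself \<Rightarrow> bool" where
  "noetherian_ring _ \<longleftrightarrow>
     (\<forall>F::'r set set. F \<noteq> {} \<and> (\<forall>X\<in>F. is_ideal X) \<longrightarrow> (\<exists>M\<in>F. \<forall>X\<in>F. M \<subseteq> X \<longrightarrow> X = M))"

lemma noetherian_ringI_no_ascending_chain:
  assumes "\<And>C :: nat \<Rightarrow> 'r::comm_ring_1 set. (\<And>i. is_ideal (C i)) \<Longrightarrow> (\<And>i. C i \<subset> C (Suc i)) \<Longrightarrow> False"
  shows "noetherian_ring TYPE('r)"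
  unfolding noetherian_ring_def
proof (intro allI impI)
  fix F :: "'r set set" assume F: "F \<noteq> {} \<and> (\<forall>X\<in>F. is_ideal X)"
  have "wf {(Y, X). is_ideal X \<and> is_ideal Y \<and> X \<subset> (Y::'r set)}"
    unfolding wf_iff_no_infinite_down_chain
  proof clarify
    fix C :: "nat \<Rightarrow> 'r set"
    assume "\<forall>i. (C (Suc i), C i) \<in> {(Y, X). is_ideal X \<and> is_ideal Y \<and> X \<subset> Y}"
    then show False using assms[of C] by auto
  qed
  moreover obtain X where "X \<in> F" using F by blast
  ultimately obtain M where M: "M \<in> F"
    and min: "\<And>Y. (Y, M) \<in> {(Y, X). is_ideal X \<and> is_ideal Y \<and> X \<subset> Y} \<Longrightarrow> Y \<notin> F"
    by (rule wfE_min) blast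
  have "Y = M" if "Y \<in> F" "M \<subseteq> Y" for Y
    using min[of Y] that M F by auto
  with M show "\<exists>M\<in>F. \<forall>X\<in>F. M \<subseteq> X \<longrightarrow> X = M" by blast
qed

context
  assumes noetherian: "noetherian_ring TYPE('r::comm_ring_1)"
begin

lemma noetherian_maximal:
  assumes "X \<in> F" and "\<And>Y. Y \<in> F \<Longrightarrow> is_ideal (Y::'r set)"
  obtains M where "M \<in> F" and "\<And>Y. Y \<in> F \<Longrightarrow> M \<subseteq> Y \<Longrightarrow> Y = M"
proof -
  have "F \<noteq> {} \<and> (\<forall>Y\<in>F. is_ideal Y)" using assms by blast
  then show ?thesis using noetherian that unfolding noetherian_ring_def by meson
qed

text \<open>A colon ideal \<open>A : x u\<close> that is maximal among those contained in a prime is itself prime.\<close>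

lemma associated_prime_between:
  assumes A: "is_ideal (A::'r set)" and P: "prime_ideal P" and xP: "ideal_colon A {x} \<subseteq> P"
  obtains Q where "associated_prime A Q" and "ideal_colon A {x} \<subseteq> Q" and "Q \<subseteq> P"
proof -
  define F where "F = {ideal_colon A {x * u} | u. ideal_colon A {x * u} \<subseteq> P}"
  have "ideal_colon A {x * 1} \<in> F" using xP unfolding F_def by (intro CollectI exI[where x=1]) simp
  moreover have "\<And>Y. Y \<in> F \<Longrightarrow> is_ideal Y" unfolding F_def using is_ideal_colon[OF A] by blast
  ultimately obtain M where "M \<in> F" and M_max: "\<And>Y. Y \<in> F \<Longrightarrow> M \<subseteq> Y \<Longrightarrow> Y = M"
    by (rule noetherian_maximal) blast+
  then obtain u where M: "M = ideal_colon A {x * u}" and MP: "M \<subseteq> P" unfolding F_def by auto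
  have extend: "ideal_colon A {x * u * v} = M" if "ideal_colon A {x * u * v} \<subseteq> P" for v
    using that M_max ideal_colon_singleton_mult[OF A, of "x * u" v] unfolding F_def M
    by (simp add: mult.assoc) blast
  have "prime_ideal M" unfolding prime_ideal_def
  proof (intro conjI allI impI)
    show "is_ideal M" using M is_ideal_colon[OF A] by simp
    show "M \<noteq> UNIV" using MP P by (auto simp: prime_ideal_def)
  next
    fix a b assume ab: "a * b \<in> M"
    show "a \<in> M \<or> b \<in> M"
    proof (cases "ideal_colon A {x * u * a} \<subseteq> P")
      case True
      have "b \<in> ideal_colon A {x * u * a}"
        using ab by (simp add: M mem_ideal_colon_singleton mult_ac)
      then show ?thesis using extend[OF True] by simp
    next
      case False
      then obtain r where "r \<in> ideal_colon A {x * u * a}" and "r \<notin> P" by blast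
      then have r: "r * (x * u * a) \<in> A" by (simp add: mem_ideal_colon_singleton)
      have "ideal_colon A {x * u * r} \<subseteq> P"
      proof
        fix s assume "s \<in> ideal_colon A {x * u * r}"
        then have "s * r \<in> P" using MP by (simp add: M mem_ideal_colon_singleton mult_ac subset_iff)
        then show "s \<in> P" using \<open>r \<notin> P\<close> prime_idealD[OF P] by blast
      qed
      moreover have "a \<in> ideal_colon A {x * u * r}"
        using r by (simp add: mem_ideal_colon_singleton mult_ac)
      ultimately show ?thesis using extend by blast
    qed
  qed
  then have "associated_prime A M" unfolding associated_prime_def M by blast
  with that show ?thesis using MP ideal_colon_singleton_mult[OF A] M by blast
qed

lemma prime_ideal_above:
  assumes D: "is_ideal (D::'r set)" and "D \<noteq> UNIV"
  obtains P where "prime_ideal P" and "D \<subseteq> P"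
proof -
  define F where "F = {E. is_ideal E \<and> D \<subseteq> E \<and> E \<noteq> (UNIV::'r set)}"
  have "D \<in> F" using assms unfolding F_def by auto
  moreover have "\<And>Y. Y \<in> F \<Longrightarrow> is_ideal Y" unfolding F_def by blast
  ultimately obtain M where "M \<in> F" and M_max: "\<And>Y. Y \<in> F \<Longrightarrow> M \<subseteq> Y \<Longrightarrow> Y = M"
    by (rule noetherian_maximal) blast+
  then have M: "is_ideal M" and DM: "D \<subseteq> M" and "M \<noteq> UNIV" unfolding F_def by auto
  have "prime_ideal M" unfolding prime_ideal_def
  proof (intro conjI allI impI M \<open>M \<noteq> UNIV\<close>)
    fix a b assume ab: "a * b \<in> M"
    have "b \<in> M" if "a \<notin> M"
    proof -
      have "ideal_insert M a \<notin> F"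
        using M_max[of "ideal_insert M a"] subset_ideal_insert[of M a] mem_ideal_insert[OF M, of a] that
        by auto
      then have "1 \<in> ideal_insert M a"
        using is_ideal_ideal_insert[OF M] subset_ideal_insert[of M a] DM unfolding F_def by auto
      then obtain m r where "1 = m + r * a" "m \<in> M" unfolding mem_ideal_insert_iff by blast
      then have "b = m * b + r * (a * b)" by (metis mult_1 distrib_right mult.assoc mult.commute)
      also have "\<dots> \<in> M"
        by (rule is_ideal_add[OF M is_ideal_mult_right[OF M \<open>m \<in> M\<close>] is_ideal_mult_left[OF M ab]])
      finally show "b \<in> M" .
    qed
    then show "a \<in> M \<or> b \<in> M" by blast
  qed
  then show ?thesis using that DM by blast
qed

lemma ex_associated_prime:
  assumes D: "is_ideal (D::'r set)" and "D \<noteq> UNIV"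
  obtains Q where "associated_prime D Q"
proof -
  obtain P where "prime_ideal P" "D \<subseteq> P" using prime_ideal_above[OF assms] .
  then show ?thesis
    using associated_prime_between[OF D, of P 1] that by (metis ideal_colon_one[OF D])
qed

text \<open>The ideal-theoretic form of \<open>L \<subseteq> \<surd>C \<Longrightarrow> L\<^sup>n \<subseteq> C\<close>: the colon ideals
  \<open>C : L\<^sup>j\<close> stabilise at some \<open>D\<close>, and an associated prime \<open>D : u\<close> of a proper \<open>D\<close>
  would contain \<open>L\<close>, forcing \<open>u \<in> D : L = D\<close>.\<close>

lemma ideal_pow_subset_if_subset_primes:
  assumes C: "is_ideal (C::'r set)" and L: "is_ideal L"
    and primes: "\<And>Q. prime_ideal Q \<Longrightarrow> C \<subseteq> Q \<Longrightarrow> L \<subseteq> Q"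
  obtains n where "n \<ge> 1" and "ideal_pow L n \<subseteq> C"
proof -
  define F where "F = {ideal_colon C (ideal_pow L j) | j. j \<ge> 1}"
  have "ideal_colon C (ideal_pow L 1) \<in> F" unfolding F_def by blast
  moreover have "\<And>Y. Y \<in> F \<Longrightarrow> is_ideal Y" unfolding F_def using is_ideal_colon[OF C] by blast
  ultimately obtain D where "D \<in> F" and D_max: "\<And>Y. Y \<in> F \<Longrightarrow> D \<subseteq> Y \<Longrightarrow> Y = D"
    by (rule noetherian_maximal) blast+
  then obtain j where "j \<ge> 1" and Dj: "D = ideal_colon C (ideal_pow L j)" unfolding F_def by blast
  have D: "is_ideal D" unfolding Dj by (rule is_ideal_colon[OF C])
  have stable: "ideal_colon C (ideal_pow L (Suc j)) = D"
    using D_max[of "ideal_colon C (ideal_pow L (Suc j))"] \<open>j \<ge> 1\<close>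
      ideal_colon_antimono[OF ideal_pow_Suc_subset[OF L]] unfolding F_def Dj by force
  have "D = UNIV"
  proof (rule ccontr)
    assume "D \<noteq> UNIV"
    then obtain Q where "associated_prime D Q" using ex_associated_prime[OF D] by blast
    then obtain u where Q: "prime_ideal Q" and Qu: "Q = ideal_colon D {u}"
      unfolding associated_prime_def by blast
    have "C \<subseteq> D" unfolding Dj by (rule subset_ideal_colon[OF C])
    also have "D \<subseteq> Q" unfolding Qu by (rule subset_ideal_colon[OF D])
    finally have "L \<subseteq> Q" by (rule primes[OF Q])
    have "u \<in> ideal_colon C (ideal_prod L (ideal_pow L j))"
    proof (rule mem_ideal_colon_ideal_prod[OF C])
      fix a b assume "a \<in> L" "b \<in> ideal_pow L j"
      then have "a * u \<in> D" using \<open>L \<subseteq> Q\<close> by (auto simp: Qu mem_ideal_colon_singleton)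
      then have "a * u * b \<in> C" using \<open>b \<in> ideal_pow L j\<close> by (simp add: Dj ideal_colon_def)
      then show "u * (a * b) \<in> C" by (simp add: mult_ac)
    qed
    then have "1 \<in> Q" using stable by (simp add: Qu mem_ideal_colon_singleton)
    then show False using one_not_mem_prime_ideal[OF Q] by contradiction
  qed
  then have "1 \<in> ideal_colon C (ideal_pow L j)" using Dj by simp
  then have "ideal_pow L j \<subseteq> C" by (auto simp: ideal_colon_def)
  then show ?thesis using that \<open>j \<ge> 1\<close> by blast
qed

subsection \<open>Finiteness of associated primes\<close>

lemma irreducible_decomposition:
  assumes B: "is_ideal (B::'r set)"
  obtains F where "finite F" and "\<And>Q. Q \<in> F \<Longrightarrow> irreducible_ideal Q" and "B = \<Inter>F"
proof -
  define decomposable where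
    "decomposable X \<longleftrightarrow> (\<exists>F. finite F \<and> (\<forall>Q\<in>F. irreducible_ideal Q) \<and> X = \<Inter>F)" for X :: "'r set"
  have "decomposable B"
  proof (rule ccontr)
    let ?F = "{X. is_ideal X \<and> \<not> decomposable X}"
    assume "\<not> decomposable B"
    with B have "B \<in> ?F" by simp
    moreover have "\<And>Y. Y \<in> ?F \<Longrightarrow> is_ideal Y" by simp
    ultimately obtain M where "M \<in> ?F" and M_max: "\<And>Y. Y \<in> ?F \<Longrightarrow> M \<subseteq> Y \<Longrightarrow> Y = M"
      by (rule noetherian_maximal) blast+
    then have M: "is_ideal M" and M_bad: "\<not> decomposable M" by simp_all
    have above: "decomposable X" if "is_ideal X" "M \<subseteq> X" "X \<noteq> M" for X
      using M_max[of X] that by blast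
    have "M \<noteq> UNIV"
      using M_bad unfolding decomposable_def by (metis Inter_empty ball_empty finite.emptyI)
    moreover have "\<not> irreducible_ideal M"
      using M_bad unfolding decomposable_def by (metis cInf_singleton finite.emptyI finite_insert singletonD)
    ultimately obtain X Y where "is_ideal X" "is_ideal Y" "M = X \<inter> Y" "M \<noteq> X" "M \<noteq> Y"
      using M unfolding irreducible_ideal_def by blast
    then obtain FX FY where "finite FX" "\<forall>Q\<in>FX. irreducible_ideal Q" "X = \<Inter>FX"
      and "finite FY" "\<forall>Q\<in>FY. irreducible_ideal Q" "Y = \<Inter>FY"
      using above[of X] above[of Y] unfolding decomposable_def by (metis inf.cobounded1 inf.cobounded2)
    then have "decomposable M"
      unfolding decomposable_def using \<open>M = X \<inter> Y\<close> by (intro exI[of _ "FX \<union> FY"]) auto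
    with M_bad show False by contradiction
  qed
  then show ?thesis using that unfolding decomposable_def by blast
qed

text \<open>Irreducible ideals are primary: once \<open>Q : b\<^sup>n\<close> has stabilised,
  \<open>Q = (Q + (a)) \<inter> (Q + (b\<^sup>n))\<close>.\<close>

lemma irreducible_ideal_primary:
  assumes Q: "irreducible_ideal (Q::'r set)" and ab: "a * b \<in> Q" and "a \<notin> Q"
  shows "b \<in> radical Q"
proof -
  have Q_ideal: "is_ideal Q" using Q unfolding irreducible_ideal_def by simp
  define F where "F = {ideal_colon Q {b ^ n} | n. True}"
  have "ideal_colon Q {b ^ 0} \<in> F" unfolding F_def by blast
  moreover have "\<And>Y. Y \<in> F \<Longrightarrow> is_ideal Y" unfolding F_def using is_ideal_colon[OF Q_ideal] by blast
  ultimately obtain M where "M \<in> F" and M_max: "\<And>Y. Y \<in> F \<Longrightarrow> M \<subseteq> Y \<Longrightarrow> Y = M"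
    by (rule noetherian_maximal) blast+
  then obtain n where Mn: "M = ideal_colon Q {b ^ n}" unfolding F_def by blast
  have "ideal_colon Q {b ^ n * b} \<in> F" unfolding F_def by (metis (mono_tags) mem_Collect_eq power_Suc2)
  then have stable: "ideal_colon Q {b ^ n * b} = ideal_colon Q {b ^ n}"
    using M_max ideal_colon_singleton_mult[OF Q_ideal] unfolding Mn by blast
  define X where "X = ideal_insert Q a"
  define Y where "Y = ideal_insert Q (b ^ n)"
  have "X \<inter> Y \<subseteq> Q"
  proof
    fix y assume "y \<in> X \<inter> Y"
    then have "y \<in> X" "y \<in> Y" by simp_all
    then obtain q r q' s where y1: "y = q + r * a" and y2: "y = q' + s * b ^ n"
      and "q \<in> Q" "q' \<in> Q" unfolding X_def Y_def mem_ideal_insert_iff by blast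
    have "y * b \<in> Q" unfolding y1 using \<open>q \<in> Q\<close> ab
      by (simp add: distrib_right mult.assoc is_ideal_add[OF Q_ideal]
          is_ideal_mult_right[OF Q_ideal] is_ideal_mult_left[OF Q_ideal])
    moreover have "s * (b ^ n * b) = y * b - q' * b" unfolding y2 by (simp add: algebra_simps)
    ultimately have "s * (b ^ n * b) \<in> Q"
      using \<open>q' \<in> Q\<close> by (simp add: is_ideal_diff[OF Q_ideal] is_ideal_mult_right[OF Q_ideal])
    then have "s * b ^ n \<in> Q" using stable by (auto simp: mem_ideal_colon_singleton set_eq_iff)
    then show "y \<in> Q" unfolding y2 using \<open>q' \<in> Q\<close> by (simp add: is_ideal_add[OF Q_ideal])
  qed
  moreover have X: "is_ideal X" "Q \<subseteq> X" "a \<in> X"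
    unfolding X_def using is_ideal_ideal_insert subset_ideal_insert mem_ideal_insert Q_ideal by blast+
  moreover have Y: "is_ideal Y" "Q \<subseteq> Y" "b ^ n \<in> Y"
    unfolding Y_def using is_ideal_ideal_insert subset_ideal_insert mem_ideal_insert Q_ideal by blast+
  ultimately have "Q = X \<or> Q = Y"
    using Q unfolding irreducible_ideal_def by blast
  then have "b ^ n \<in> Q" using X(3) Y(3) \<open>a \<notin> Q\<close> by blast
  then show ?thesis unfolding radical_def by blast
qed

text \<open>If \<open>P = B : f\<close> for \<open>B = \<Inter>F\<close>, then \<open>P\<close> contains the radicals of those \<open>Q \<in> F\<close>
  not containing \<open>f\<close>, and by prime avoidance it contains one of them entirely.\<close>

lemma associated_prime_Inter_irreducible:
  assumes "finite F" and irreducible: "\<And>Q. Q \<in> F \<Longrightarrow> irreducible_ideal Q"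
    and P: "associated_prime (\<Inter>F) (P::'r set)"
  shows "\<exists>Q\<in>F. P = radical Q"
proof -
  obtain f where P_colon: "P = ideal_colon (\<Inter>F) {f}" and P_prime: "prime_ideal P"
    using P unfolding associated_prime_def by blast
  have ideals: "\<And>Q. Q \<in> F \<Longrightarrow> is_ideal Q" using irreducible unfolding irreducible_ideal_def by simp
  define F' where "F' = {Q\<in>F. f \<notin> Q}"
  have "finite F'" using \<open>finite F\<close> unfolding F'_def by simp
  have P_sub: "P \<subseteq> radical Q" if "Q \<in> F'" for Q
  proof
    fix r assume "r \<in> P"
    then have "f * r \<in> Q" using that P_colon unfolding F'_def by (auto simp: mem_ideal_colon_singleton mult.commute)
    then show "r \<in> radical Q" using irreducible_ideal_primary irreducible that unfolding F'_def by blast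
  qed
  have absorb: "c * z \<in> X" if "X \<in> radical ` F'" "z \<in> X" for X z c
    using that radical_mult_left ideals unfolding F'_def by auto
  have "\<Inter>(radical ` F') \<subseteq> P"
  proof
    fix z assume "z \<in> \<Inter>(radical ` F')"
    then obtain N where N: "\<forall>Q\<in>F'. z ^ N \<in> Q"
      using ex_power_mem_all_radical[OF \<open>finite F'\<close>, of z] ideals unfolding F'_def by auto
    have "z ^ N * f \<in> \<Inter>F"
      using N ideals unfolding F'_def by (auto intro: is_ideal_mult_left is_ideal_mult_right)
    then have "z ^ N \<in> P" using P_colon by (simp add: mem_ideal_colon_singleton)
    then show "z \<in> P" using prime_ideal_power_mem[OF P_prime] by blast
  qed
  with prime_ideal_Inter_subsetD[OF P_prime finite_imageI[OF \<open>finite F'\<close>] absorb]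
  obtain Q where "Q \<in> F'" "radical Q \<subseteq> P" by blast
  then show ?thesis using P_sub unfolding F'_def by blast
qed

lemma finite_associated_primes:
  assumes "is_ideal (B::'r set)"
  shows "finite {P. associated_prime B P}"
proof -
  obtain F where "finite F" "\<And>Q. Q \<in> F \<Longrightarrow> irreducible_ideal Q" "B = \<Inter>F"
    using irreducible_decomposition[OF assms] by blast
  then have "{P. associated_prime B P} \<subseteq> radical ` F"
    using associated_prime_Inter_irreducible by blast
  then show ?thesis using \<open>finite F\<close> finite_subset by blast
qed

text \<open>If the associated prime \<open>Q'\<close> of \<open>A\<close> between \<open>A : x\<close> and \<open>Q\<close> were not embedded, it
  would contain the embedded locus of \<open>B\<close>, hence an embedded prime of \<open>B\<close> and a smaller
  associated prime of \<open>B\<close>; the latter contains \<open>I \<supseteq> A\<close> and so an associated prime of \<open>A\<close>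
  strictly below \<open>Q'\<close>.\<close>

lemma embedded_locus_subset_prime:
  assumes A: "is_ideal (A::'r set)" and B: "is_ideal B" and "A \<subseteq> I"
    and B_primes: "\<And>P. prime_ideal P \<Longrightarrow> B \<subseteq> P \<Longrightarrow> I \<subseteq> P"
    and locus: "ideal_pow (embedded_locus B) N \<subseteq> ideal_colon A {x}"
    and Q: "prime_ideal Q" and "ideal_colon A {x} \<subseteq> Q"
  shows "embedded_locus A \<subseteq> Q"
proof -
  obtain Q' where Q': "associated_prime A Q'" "ideal_colon A {x} \<subseteq> Q'" "Q' \<subseteq> Q"
    using associated_prime_between[OF A Q \<open>ideal_colon A {x} \<subseteq> Q\<close>] .
  have Q'_prime: "prime_ideal Q'" using Q'(1) unfolding associated_prime_def by blast
  have "embedded_prime A Q'"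
  proof (rule ccontr)
    assume not_embedded: "\<not> embedded_prime A Q'"
    have "embedded_locus B \<subseteq> Q'"
      using locus Q'(2) by (rule prime_ideal_ideal_pow_subset[OF Q'_prime order.trans])
    moreover have "finite {P. embedded_prime B P}"
      using finite_associated_primes[OF B] by (rule finite_subset[rotated]) (auto simp: embedded_prime_def)
    moreover have "c * z \<in> E" if "E \<in> {P. embedded_prime B P}" "z \<in> E" for E z c
      using that is_ideal_mult_left prime_ideal_is_ideal
      unfolding embedded_prime_def associated_prime_def by blast
    ultimately obtain E where "embedded_prime B E" "E \<subseteq> Q'"
      using prime_ideal_Inter_subsetD[OF Q'_prime] by blast
    then obtain E' where "associated_prime B E'" "E' \<subset> E"
      unfolding embedded_prime_def by blast
    then obtain v where E'_prime: "prime_ideal E'" and "E' = ideal_colon B {v}"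
      unfolding associated_prime_def by blast
    then have "B \<subseteq> E'" using subset_ideal_colon[OF B] by blast
    then have "ideal_colon A {1} \<subseteq> E'"
      using B_primes[OF E'_prime] \<open>A \<subseteq> I\<close> by (simp add: ideal_colon_one[OF A])
    then obtain Q'' where "associated_prime A Q''" "Q'' \<subseteq> E'"
      using associated_prime_between[OF A E'_prime] by blast
    moreover have "Q'' \<subset> Q'" using \<open>Q'' \<subseteq> E'\<close> \<open>E' \<subset> E\<close> \<open>E \<subseteq> Q'\<close> by blast
    ultimately show False using not_embedded Q'(1) unfolding embedded_prime_def by blast
  qed
  then show ?thesis using Q'(3) by blast
qed

lemma mem_symbolic_power_if_colon:
  assumes I: "is_ideal (I::'r set)" and "k \<ge> 1"
    and locus: "ideal_pow (embedded_locus (ideal_pow I (Suc k))) N \<subseteq> ideal_colon (ideal_pow I k) {x}"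
  shows "x \<in> symbolic_power I k"
proof -
  let ?A = "ideal_pow I k" and ?C = "ideal_colon (ideal_pow I k) {x}"
  have "embedded_locus ?A \<subseteq> Q" if "prime_ideal Q" "?C \<subseteq> Q" for Q
  proof (rule embedded_locus_subset_prime[OF is_ideal_ideal_pow is_ideal_ideal_pow _ _ locus that])
    show "?A \<subseteq> I" using ideal_pow_antimono[OF I \<open>k \<ge> 1\<close>] ideal_pow_one[OF I] by simp
    show "I \<subseteq> P" if "prime_ideal P" "ideal_pow I (Suc k) \<subseteq> P" for P
      using prime_ideal_ideal_pow_subset that by blast
  qed
  then obtain n where "n \<ge> 1" "ideal_pow (embedded_locus ?A) n \<subseteq> ?C"
    using ideal_pow_subset_if_subset_primes[OF is_ideal_colon[OF is_ideal_ideal_pow] is_ideal_embedded_locus]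
    by blast
  then show ?thesis unfolding mem_symbolic_power_iff mem_ideal_colon_iff_subset by blast
qed

lemma derivation_symbolic_power:
  assumes d: "derivation d" and I: "is_ideal (I::'r set)" and f: "f \<in> symbolic_power I (Suc k)"
  shows "d f \<in> symbolic_power I k"
proof (cases "k = 0")
  case False
  let ?A = "ideal_pow I k" and ?B = "ideal_pow I (Suc k)" and ?L = "embedded_locus (ideal_pow I (Suc k))"
  obtain t where t: "f \<in> ideal_colon ?B (ideal_pow ?L t)"
    using f unfolding mem_symbolic_power_iff by blast
  have "d f \<in> ideal_colon ?A (ideal_prod (ideal_pow ?L t) (ideal_pow ?L t))"
  proof (rule mem_ideal_colon_ideal_prod[OF is_ideal_ideal_pow])
    fix g h assume "g \<in> ideal_pow ?L t" "h \<in> ideal_pow ?L t"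
    then have fg: "f * g \<in> ?B" and fh: "f * h \<in> ?B" using t by (auto simp: ideal_colon_def)
    have "f * g * h \<in> ?B" using fg by (rule is_ideal_mult_right[OF is_ideal_ideal_pow])
    then have "d (f * g * h) \<in> ?A" by (rule derivation_mem_ideal_pow[OF d])
    moreover have "f * g * d h + f * h * d g \<in> ?A"
      using fg fh ideal_pow_Suc_subset[OF I, of k]
      by (auto intro: is_ideal_add[OF is_ideal_ideal_pow] is_ideal_mult_right[OF is_ideal_ideal_pow])
    moreover have "d (f * g * h) = d f * (g * h) + (f * g * d h + f * h * d g)"
      by (simp add: derivation_mult[OF d] algebra_simps)
    ultimately show "d f * (g * h) \<in> ?A"
      by (metis add_diff_cancel is_ideal_diff[OF is_ideal_ideal_pow])
  qed
  then have "ideal_pow ?L (t + t) \<subseteq> ideal_colon ?A {d f}"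
    using ideal_pow_add_subset unfolding mem_ideal_colon_iff_subset by blast
  then show ?thesis
    using mem_symbolic_power_if_colon[OF I] False by simp
qed (simp add: symbolic_power_0)

end

section \<open>Polynomials\<close>

lemma lookup_pderiv_var:
  "Poly_Mapping.lookup (pderiv_var i f) m =
     of_nat (Poly_Mapping.lookup m i + 1) * Poly_Mapping.lookup f (m + Poly_Mapping.single i 1)"
proof -
  let ?e = "Poly_Mapping.single i (1::nat)"
  have "{m. of_nat (Poly_Mapping.lookup m i + 1) * Poly_Mapping.lookup f (m + ?e) \<noteq> 0}
        \<subseteq> (\<lambda>m. m + ?e) -` Poly_Mapping.keys f"
    by (auto simp: in_keys_iff)
  moreover have "finite ((\<lambda>m. m + ?e) -` Poly_Mapping.keys f)"
    by (rule finite_vimageI) (auto simp: inj_on_def)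
  ultimately show ?thesis
    unfolding pderiv_var_def by (subst Abs_poly_mapping_inverse) (auto intro: finite_subset)
qed

lemma pderiv_var_add: "pderiv_var i (f + g) = pderiv_var i f + pderiv_var i g"
  by (rule poly_mapping_eqI) (simp add: lookup_pderiv_var lookup_add distrib_left)

lemma pderiv_var_sum: "pderiv_var i (sum g S) = (\<Sum>x\<in>S. pderiv_var i (g x))"
proof (induction S rule: infinite_finite_induct)
  case (infinite S)
  then show ?case by (simp add: poly_mapping_eqI lookup_pderiv_var)
next
  case empty
  then show ?case by (simp add: poly_mapping_eqI lookup_pderiv_var)
qed (simp add: pderiv_var_add)

lemma eq_add_single_iff:
  fixes m p :: "'n \<Rightarrow>\<^sub>0 nat"
  shows "m = p + Poly_Mapping.single i 1 \<longleftrightarrow>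
     Poly_Mapping.lookup m i \<noteq> 0 \<and> m - Poly_Mapping.single i 1 = p"
proof
  assume "m = p + Poly_Mapping.single i 1"
  then show "Poly_Mapping.lookup m i \<noteq> 0 \<and> m - Poly_Mapping.single i 1 = p" by (simp add: lookup_add)
next
  assume m: "Poly_Mapping.lookup m i \<noteq> 0 \<and> m - Poly_Mapping.single i 1 = p"
  show "m = p + Poly_Mapping.single i 1"
  proof (rule poly_mapping_eqI)
    fix x
    show "Poly_Mapping.lookup m x = Poly_Mapping.lookup (p + Poly_Mapping.single i 1) x"
      using m by (cases "x = i") (auto simp: lookup_add lookup_minus lookup_single)
  qed
qed

lemma pderiv_var_single:
  "pderiv_var i (Poly_Mapping.single m c) =
    (if Poly_Mapping.lookup m i = 0 then 0
     else Poly_Mapping.single (m - Poly_Mapping.single i 1) (of_nat (Poly_Mapping.lookup m i) * c))"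
proof (rule poly_mapping_eqI)
  fix p
  let ?e = "Poly_Mapping.single i (1::nat)"
  show "Poly_Mapping.lookup (pderiv_var i (Poly_Mapping.single m c)) p =
    Poly_Mapping.lookup (if Poly_Mapping.lookup m i = 0 then 0
     else Poly_Mapping.single (m - ?e) (of_nat (Poly_Mapping.lookup m i) * c)) p"
  proof (cases "m = p + ?e")
    case True
    then have "Poly_Mapping.lookup p i + 1 = Poly_Mapping.lookup m i" by (simp add: lookup_add)
    moreover from True have "Poly_Mapping.lookup m i \<noteq> 0 \<and> m - ?e = p"
      unfolding eq_add_single_iff .
    ultimately show ?thesis using True by (simp add: lookup_pderiv_var lookup_single when_def)
  next
    case False
    then have "\<not> (Poly_Mapping.lookup m i \<noteq> 0 \<and> m - ?e = p)" unfolding eq_add_single_iff .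
    then show ?thesis using False by (auto simp: lookup_pderiv_var lookup_single when_def)
  qed
qed

lemma pderiv_var_single_mult:
  fixes c d :: "'a::comm_ring_1"
  shows "pderiv_var i (Poly_Mapping.single m c * Poly_Mapping.single m' d) =
    pderiv_var i (Poly_Mapping.single m c) * Poly_Mapping.single m' d +
    Poly_Mapping.single m c * pderiv_var i (Poly_Mapping.single m' d)"
proof -
  let ?e = "Poly_Mapping.single i (Suc 0)"
  let ?a = "Poly_Mapping.lookup m i" and ?b = "Poly_Mapping.lookup m' i"
  have lookup_sum: "Poly_Mapping.lookup (m + m') i = ?a + ?b" by (simp add: lookup_add)
  have "?a \<noteq> 0 \<Longrightarrow> m' + (m - ?e) = m + m' - ?e" and "?b \<noteq> 0 \<Longrightarrow> m + (m' - ?e) = m + m' - ?e"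
    by (auto simp: poly_mapping_eq_iff fun_eq_iff lookup_add lookup_minus lookup_single when_def)
  then show ?thesis
    unfolding mult_single pderiv_var_single lookup_sum
    by (cases "?a = 0"; cases "?b = 0") (simp_all add: mult_single single_add[symmetric] algebra_simps)
qed

lemma poly_mapping_eq_sum_single:
  "f = (\<Sum>m\<in>Poly_Mapping.keys f. Poly_Mapping.single m (Poly_Mapping.lookup f m))"
proof (rule poly_mapping_eqI)
  fix p
  have "(\<Sum>m\<in>Poly_Mapping.keys f. Poly_Mapping.lookup (Poly_Mapping.single m (Poly_Mapping.lookup f m)) p)
      = (\<Sum>m\<in>Poly_Mapping.keys f. if p = m then Poly_Mapping.lookup f m else 0)"
    by (rule sum.cong) (auto simp: lookup_single when_def)
  then show "Poly_Mapping.lookup f p = Poly_Mapping.lookup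
      (\<Sum>m\<in>Poly_Mapping.keys f. Poly_Mapping.single m (Poly_Mapping.lookup f m)) p"
    by (simp add: lookup_sum in_keys_iff)
qed

lemma pderiv_var_mult:
  fixes f g :: "('n \<Rightarrow>\<^sub>0 nat) \<Rightarrow>\<^sub>0 'a::comm_ring_1"
  shows "pderiv_var i (f * g) = pderiv_var i f * g + f * pderiv_var i g"
proof -
  define sf where "sf m = Poly_Mapping.single m (Poly_Mapping.lookup f m)" for m
  define sg where "sg m = Poly_Mapping.single m (Poly_Mapping.lookup g m)" for m
  have f: "f = (\<Sum>m\<in>Poly_Mapping.keys f. sf m)" unfolding sf_def by (rule poly_mapping_eq_sum_single)
  have g: "g = (\<Sum>m\<in>Poly_Mapping.keys g. sg m)" unfolding sg_def by (rule poly_mapping_eq_sum_single)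
  have "f * g = (\<Sum>a\<in>Poly_Mapping.keys f. \<Sum>b\<in>Poly_Mapping.keys g. sf a * sg b)"
    by (subst f, subst g) (simp add: sum_product)
  then have "pderiv_var i (f * g) =
      (\<Sum>a\<in>Poly_Mapping.keys f. \<Sum>b\<in>Poly_Mapping.keys g. pderiv_var i (sf a) * sg b)
      + (\<Sum>a\<in>Poly_Mapping.keys f. \<Sum>b\<in>Poly_Mapping.keys g. sf a * pderiv_var i (sg b))"
    by (simp add: pderiv_var_sum sf_def sg_def pderiv_var_single_mult sum.distrib)
  also have "\<dots> = pderiv_var i f * g + f * pderiv_var i g"
    by (subst (3 4) f, subst (3 4) g) (simp add: pderiv_var_sum sum_product)
  finally show ?thesis .
qed

lemma derivation_pderiv_var: "derivation (pderiv_var i :: ('n, 'a::comm_ring_1) mpoly \<Rightarrow> _)"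
  unfolding derivation_def by (simp add: pderiv_var_add pderiv_var_mult)

lemma nat_seq_mono_subseq:
  fixes u :: "nat \<Rightarrow> nat"
  obtains r :: "nat \<Rightarrow> nat" where "strict_mono r" and "mono (u \<circ> r)"
proof -
  obtain f where f: "strict_mono f" and "monoseq (\<lambda>n. u (f n))" using seq_monosub by blast
  then consider "mono (u \<circ> f)" | "antimono (u \<circ> f)"
    unfolding monoseq_iff by (auto simp: comp_def)
  then show ?thesis
  proof cases
    case 1
    then show ?thesis by (rule that[OF f])
  next
    case 2
    obtain n0 where n0: "\<And>n. u (f n0) \<le> u (f n)"
      using ex_has_least_nat[of "\<lambda>_. True" 0 "\<lambda>n. u (f n)"] by auto
    have const: "u (f (n0 + n)) = u (f n0)" for n
      using n0[of "n0 + n"] 2 by (auto simp: antimono_def intro: antisym)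
    have "strict_mono (\<lambda>n. f (n0 + n))" using f by (simp add: strict_mono_def)
    moreover have "mono (u \<circ> (\<lambda>n. f (n0 + n)))" by (simp add: mono_def const)
    ultimately show ?thesis by (rule that)
  qed
qed

lemma dickson_subseq:
  fixes s :: "nat \<Rightarrow> 'n \<Rightarrow> nat"
  assumes "finite S"
  shows "\<exists>r::nat \<Rightarrow> nat. strict_mono r \<and> (\<forall>i j. i \<le> j \<longrightarrow> (\<forall>x\<in>S. s (r i) x \<le> s (r j) x))"
  using assms
proof (induction S rule: finite_induct)
  case empty
  have "strict_mono (id :: nat \<Rightarrow> nat)" by (rule strict_mono_id)
  then show ?case by blast
next
  case (insert c S)
  then obtain r :: "nat \<Rightarrow> nat" where r: "strict_mono r"
    and rS: "\<And>i j x. i \<le> j \<Longrightarrow> x \<in> S \<Longrightarrow> s (r i) x \<le> s (r j) x"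
    by blast
  obtain r' :: "nat \<Rightarrow> nat" where r': "strict_mono r'" and c: "mono ((\<lambda>n. s (r n) c) \<circ> r')"
    by (rule nat_seq_mono_subseq[of "\<lambda>n. s (r n) c"])
  have "s (r (r' i)) x \<le> s (r (r' j)) x" if "i \<le> j" "x \<in> insert c S" for i j x
  proof (cases "x = c")
    case True
    then show ?thesis using c \<open>i \<le> j\<close> by (simp add: mono_def)
  next
    case False
    moreover have "r' i \<le> r' j" using strict_mono_mono[OF r'] \<open>i \<le> j\<close> by (simp add: mono_def)
    ultimately show ?thesis using rS that by simp
  qed
  moreover have "strict_mono (r \<circ> r')" using r r' by (simp add: strict_mono_def)
  ultimately show ?case by auto
qed

lemma dickson:
  fixes s :: "nat \<Rightarrow> 'n::finite \<Rightarrow> nat"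
  obtains i j where "i < j" and "s i \<le> s j"
proof -
  obtain r :: "nat \<Rightarrow> nat" where "strict_mono r" and "\<forall>i j. i \<le> j \<longrightarrow> (\<forall>x. s (r i) x \<le> s (r j) x)"
    using dickson_subseq[of UNIV s] by auto
  then have "r 0 < r 1" and "s (r 0) \<le> s (r 1)" by (simp_all add: strict_mono_def le_fun_def)
  then show ?thesis using that by blast
qed

text \<open>Variables are compared through an injection \<open>enc\<close> into \<open>nat\<close>, since the
  variable type carries no order.\<close>

definition lex_less :: "('n \<Rightarrow> nat) \<Rightarrow> ('n \<Rightarrow>\<^sub>0 nat) \<Rightarrow> ('n \<Rightarrow>\<^sub>0 nat) \<Rightarrow> bool" where
  "lex_less enc m m' \<longleftrightarrow> (\<exists>x. Poly_Mapping.lookup m x < Poly_Mapping.lookup m' x \<and>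
      (\<forall>y. enc y < enc x \<longrightarrow> Poly_Mapping.lookup m y = Poly_Mapping.lookup m' y))"

definition lex_le :: "('n \<Rightarrow> nat) \<Rightarrow> ('n \<Rightarrow>\<^sub>0 nat) \<Rightarrow> ('n \<Rightarrow>\<^sub>0 nat) \<Rightarrow> bool" where
  "lex_le enc m m' \<longleftrightarrow> m = m' \<or> lex_less enc m m'"

lemma lex_less_irrefl: "\<not> lex_less enc m m"
  unfolding lex_less_def by auto

lemma lex_less_add_left: "lex_less enc a b \<Longrightarrow> lex_less enc (d + a) (d + b)"
  unfolding lex_less_def by (simp add: lookup_add)

lemma lex_le_add_left: "lex_le enc a b \<Longrightarrow> lex_le enc (d + a) (d + b)"
  unfolding lex_le_def using lex_less_add_left by blast

lemma lex_less_total: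
  assumes "m \<noteq> m'"
  shows "lex_less enc m m' \<or> lex_less enc m' m"
proof -
  obtain x0 where "Poly_Mapping.lookup m x0 \<noteq> Poly_Mapping.lookup m' x0"
    using assms by (metis poly_mapping_eqI)
  then obtain x where x: "Poly_Mapping.lookup m x \<noteq> Poly_Mapping.lookup m' x"
    and x_min: "\<And>y. Poly_Mapping.lookup m y \<noteq> Poly_Mapping.lookup m' y \<Longrightarrow> enc x \<le> enc y"
    using ex_has_least_nat[of "\<lambda>y. Poly_Mapping.lookup m y \<noteq> Poly_Mapping.lookup m' y" x0 enc] by blast
  then have "\<forall>y. enc y < enc x \<longrightarrow> Poly_Mapping.lookup m y = Poly_Mapping.lookup m' y"
    by (meson not_le)
  then show ?thesis
    using x unfolding lex_less_def by (metis linorder_neqE_nat)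
qed

lemma lex_le_if_le:
  assumes "\<And>x. Poly_Mapping.lookup a x \<le> Poly_Mapping.lookup b x"
  shows "lex_le enc a b"
proof -
  have "\<not> lex_less enc b a" using assms unfolding lex_less_def by (meson not_le)
  then show ?thesis using lex_less_total unfolding lex_le_def by blast
qed

context
  fixes enc :: "'n::finite \<Rightarrow> nat"
  assumes enc: "inj enc"
begin

lemma lex_less_trans:
  assumes "lex_less enc a b" and "lex_less enc b c"
  shows "lex_less enc a c"
proof -
  obtain x where x: "Poly_Mapping.lookup a x < Poly_Mapping.lookup b x"
    "\<forall>y. enc y < enc x \<longrightarrow> Poly_Mapping.lookup a y = Poly_Mapping.lookup b y"
    using assms(1) unfolding lex_less_def by blast
  obtain x' where x': "Poly_Mapping.lookup b x' < Poly_Mapping.lookup c x'"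
    "\<forall>y. enc y < enc x' \<longrightarrow> Poly_Mapping.lookup b y = Poly_Mapping.lookup c y"
    using assms(2) unfolding lex_less_def by blast
  consider "enc x < enc x'" | "enc x' < enc x" | "x = x'"
    using enc by (metis injD linorder_neqE_nat)
  then show ?thesis
    unfolding lex_less_def using x x' by cases (metis order.strict_trans)+
qed

lemma lex_le_trans: "lex_le enc a b \<Longrightarrow> lex_le enc b c \<Longrightarrow> lex_le enc a c"
  unfolding lex_le_def using lex_less_trans by blast

lemma lex_le_antisym: "lex_le enc a b \<Longrightarrow> lex_le enc b a \<Longrightarrow> a = b"
  unfolding lex_le_def using lex_less_trans lex_less_irrefl by blast

lemma lex_less_iff_not_le: "lex_less enc a b \<longleftrightarrow> \<not> lex_le enc b a"
  unfolding lex_le_def using lex_less_trans lex_less_irrefl lex_less_total by metis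

lemma wf_lex_less: "wf {(a, b). lex_less enc a b}"
  unfolding wf_iff_no_infinite_down_chain
proof clarify
  fix f assume "\<forall>i. (f (Suc i), f i) \<in> {(a, b). lex_less enc a b}"
  then have "lex_less enc (f j) (f i)" if "i < j" for i j
    using that by (induction j) (auto simp: less_Suc_eq intro: lex_less_trans)
  moreover obtain i j where "i < j" "Poly_Mapping.lookup (f i) \<le> Poly_Mapping.lookup (f j)"
    by (rule dickson)
  ultimately show False
    using lex_le_if_le[of "f i" "f j" enc] lex_less_iff_not_le by (metis le_funD)
qed

end

subsection \<open>Leading monomials and the Hilbert basis theorem\<close>

definition is_lead_monom :: "('n \<Rightarrow> nat) \<Rightarrow> ('n, 'a::zero) mpoly \<Rightarrow> ('n \<Rightarrow>\<^sub>0 nat) \<Rightarrow> bool" where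
  "is_lead_monom enc f m \<longleftrightarrow> m \<in> Poly_Mapping.keys f \<and> (\<forall>m'\<in>Poly_Mapping.keys f. lex_le enc m' m)"

definition lead_monom :: "('n \<Rightarrow> nat) \<Rightarrow> ('n, 'a::zero) mpoly \<Rightarrow> ('n \<Rightarrow>\<^sub>0 nat)" where
  "lead_monom enc f = (SOME m. is_lead_monom enc f m)"

definition lead_monoms :: "('n \<Rightarrow> nat) \<Rightarrow> ('n, 'a::zero) mpoly set \<Rightarrow> ('n \<Rightarrow>\<^sub>0 nat) set" where
  "lead_monoms enc X = {lead_monom enc f | f. f \<in> X \<and> f \<noteq> 0}"

lemma lead_monoms_mono: "X \<subseteq> Y \<Longrightarrow> lead_monoms enc X \<subseteq> lead_monoms enc Y"
  unfolding lead_monoms_def by blast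

lemma lookup_single_mult:
  fixes f :: "('n, 'a::comm_ring_1) mpoly"
  shows "Poly_Mapping.lookup (Poly_Mapping.single d c * f) (d + q) = c * Poly_Mapping.lookup f q"
proof -
  have "Poly_Mapping.single d c * f =
      (\<Sum>p\<in>Poly_Mapping.keys f. Poly_Mapping.single (d + p) (c * Poly_Mapping.lookup f p))"
    by (subst poly_mapping_eq_sum_single[of f]) (simp add: sum_distrib_left mult_single)
  then have "Poly_Mapping.lookup (Poly_Mapping.single d c * f) (d + q) =
      (\<Sum>p\<in>Poly_Mapping.keys f. if p = q then c * Poly_Mapping.lookup f p else 0)"
    by (simp add: lookup_sum lookup_single when_def)
  then show ?thesis by (simp add: in_keys_iff)
qed

lemma keys_single_mult:
  fixes f :: "('n, 'a::comm_ring_1) mpoly"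
  shows "Poly_Mapping.keys (Poly_Mapping.single d c * f) \<subseteq> (\<lambda>p. d + p) ` Poly_Mapping.keys f"
proof
  fix k assume "k \<in> Poly_Mapping.keys (Poly_Mapping.single d c * f)"
  then obtain a b where "k = a + b" "a \<in> Poly_Mapping.keys (Poly_Mapping.single d c)" "b \<in> Poly_Mapping.keys f"
    using keys_mult by blast
  then show "k \<in> (\<lambda>p. d + p) ` Poly_Mapping.keys f" by (auto split: if_splits)
qed

context
  fixes enc :: "'n::finite \<Rightarrow> nat"
  assumes enc: "inj enc"
begin

lemma is_lead_monom_lead_monom:
  assumes "f \<noteq> 0"
  shows "is_lead_monom enc f (lead_monom enc f)"
proof -
  have "\<exists>m\<in>K. \<forall>m'\<in>K. lex_le enc m' m" if "finite K" "K \<noteq> {}" for K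
    using that
  proof (induction K rule: finite_ne_induct)
    case (insert x K)
    then obtain m where m: "m \<in> K" "\<forall>m'\<in>K. lex_le enc m' m" by blast
    show ?case
    proof (cases "lex_le enc x m")
      case False
      then have "lex_le enc m x" using lex_less_iff_not_le[OF enc] lex_le_def by metis
      then show ?thesis using m lex_le_trans[OF enc] by (auto simp: lex_le_def)
    qed (use m in blast)
  qed (simp add: lex_le_def)
  moreover have "Poly_Mapping.keys f \<noteq> {}" using assms by simp
  ultimately obtain m where "is_lead_monom enc f m"
    unfolding is_lead_monom_def using finite_keys by blast
  then show ?thesis unfolding lead_monom_def by (rule someI)
qed

lemma lead_monom_eqI: "is_lead_monom enc f m \<Longrightarrow> lead_monom enc f = m"
  using is_lead_monom_lead_monom[of f] lex_le_antisym[OF enc]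
  unfolding is_lead_monom_def by fastforce

lemma lead_monoms_upward_closed:
  fixes X :: "('n, 'a::comm_ring_1) mpoly set"
  assumes X: "is_ideal X" and "m \<in> lead_monoms enc X"
    and le: "\<And>x. Poly_Mapping.lookup m x \<le> Poly_Mapping.lookup m' x"
  shows "m' \<in> lead_monoms enc X"
proof -
  obtain f where "f \<in> X" "f \<noteq> 0" and "m = lead_monom enc f"
    using assms(2) unfolding lead_monoms_def by blast
  then have f_lead: "is_lead_monom enc f m" using is_lead_monom_lead_monom by simp
  define d where "d = m' - m"
  have "d + m = m'" unfolding d_def
    by (rule poly_mapping_eqI) (use le in \<open>simp add: lookup_add lookup_minus\<close>)
  define g where "g = Poly_Mapping.single d (1::'a) * f"
  have "g \<in> X" unfolding g_def by (rule is_ideal_mult_left[OF X \<open>f \<in> X\<close>])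
  have "Poly_Mapping.lookup g (d + m) = Poly_Mapping.lookup f m"
    unfolding g_def by (simp add: lookup_single_mult)
  then have "d + m \<in> Poly_Mapping.keys g" using f_lead unfolding is_lead_monom_def by (simp add: in_keys_iff)
  moreover have "lex_le enc k (d + m)" if "k \<in> Poly_Mapping.keys g" for k
    using that keys_single_mult f_lead lex_le_add_left unfolding g_def is_lead_monom_def by blast
  ultimately have "is_lead_monom enc g m'" unfolding is_lead_monom_def \<open>d + m = m'\<close> by blast
  moreover from this have "g \<noteq> 0" unfolding is_lead_monom_def by auto
  ultimately show ?thesis
    using \<open>g \<in> X\<close> lead_monom_eqI unfolding lead_monoms_def by blast
qed

lemma lead_monom_cancel:
  fixes f g :: "('n, 'a::field) mpoly"
  assumes "f \<noteq> 0" "g \<noteq> 0" and m: "lead_monom enc f = m" "lead_monom enc g = m"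
  defines "h \<equiv> f - Poly_Mapping.single 0 (Poly_Mapping.lookup f m / Poly_Mapping.lookup g m) * g"
  assumes "h \<noteq> 0"
  shows "lex_less enc (lead_monom enc h) m"
proof -
  have f_lead: "is_lead_monom enc f m" and g_lead: "is_lead_monom enc g m"
    using is_lead_monom_lead_monom[OF \<open>f \<noteq> 0\<close>] is_lead_monom_lead_monom[OF \<open>g \<noteq> 0\<close>] m by simp_all
  then have "Poly_Mapping.lookup g m \<noteq> 0" unfolding is_lead_monom_def by (simp add: in_keys_iff)
  then have "Poly_Mapping.lookup h m = 0"
    using lookup_single_mult[of 0 _ g m] unfolding h_def by (simp add: lookup_minus)
  moreover have "Poly_Mapping.keys h \<subseteq> Poly_Mapping.keys f \<union> Poly_Mapping.keys g"
    unfolding h_def using keys_diff keys_single_mult[of 0 _ g] by fastforce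
  moreover have "is_lead_monom enc h (lead_monom enc h)" using is_lead_monom_lead_monom \<open>h \<noteq> 0\<close> by blast
  ultimately show ?thesis
    using f_lead g_lead unfolding is_lead_monom_def lex_le_def by (auto simp: in_keys_iff)
qed

text \<open>An ideal is determined inside a larger one by its leading monomials: a minimal
  counterexample could be reduced by cancelling its leading term.\<close>

lemma ideal_subset_if_lead_monoms_subset:
  fixes X Y :: "('n, 'a::field) mpoly set"
  assumes X: "is_ideal X" and Y: "is_ideal Y" and "X \<subseteq> Y"
    and lead: "lead_monoms enc Y \<subseteq> lead_monoms enc X"
  shows "Y \<subseteq> X"
proof (rule ccontr)
  assume "\<not> Y \<subseteq> X"
  define bad where "bad = Y - X"
  obtain f0 where "f0 \<in> bad" using \<open>\<not> Y \<subseteq> X\<close> unfolding bad_def by blast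
  then obtain m where "m \<in> lead_monom enc ` bad"
    and m_min: "\<And>m'. (m', m) \<in> {(a, b). lex_less enc a b} \<Longrightarrow> m' \<notin> lead_monom enc ` bad"
    using wfE_min[OF wf_lex_less[OF enc], of "lead_monom enc f0" "lead_monom enc ` bad"] by blast
  then obtain f where f: "f \<in> Y" "f \<notin> X" and fm: "lead_monom enc f = m" unfolding bad_def by blast
  have "f \<noteq> 0" using f is_ideal_zero[OF X] by auto
  then have "m \<in> lead_monoms enc X" using lead f fm unfolding lead_monoms_def by blast
  then obtain g where "g \<in> X" "g \<noteq> 0" and gm: "lead_monom enc g = m" unfolding lead_monoms_def by blast
  define h where "h = f - Poly_Mapping.single 0 (Poly_Mapping.lookup f m / Poly_Mapping.lookup g m) * g"
  have cg: "Poly_Mapping.single 0 (Poly_Mapping.lookup f m / Poly_Mapping.lookup g m) * g \<in> X"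
    by (rule is_ideal_mult_left[OF X \<open>g \<in> X\<close>])
  have "h \<in> Y" unfolding h_def using f cg \<open>X \<subseteq> Y\<close> by (intro is_ideal_diff[OF Y]) auto
  moreover have "h \<notin> X"
    using f(2) is_ideal_add[OF X _ cg] unfolding h_def by force
  ultimately have "h \<in> bad" and "h \<noteq> 0" using is_ideal_zero[OF X] unfolding bad_def by auto
  moreover have "lex_less enc (lead_monom enc h) m"
    using lead_monom_cancel[OF \<open>f \<noteq> 0\<close> \<open>g \<noteq> 0\<close> fm gm] \<open>h \<noteq> 0\<close> unfolding h_def by blast
  ultimately show False using m_min by blast
qed

text \<open>In a strictly ascending chain each ideal has a new leading monomial; by Dickson's lemma one
  of them divides a later one, which is then not new after all.\<close>

lemma no_ascending_ideal_chain:
  fixes C :: "nat \<Rightarrow> ('n, 'a::field) mpoly set"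
  assumes ideals: "\<And>i. is_ideal (C i)" and strict: "\<And>i. C i \<subset> C (Suc i)"
  shows False
proof -
  have "\<exists>m. m \<in> lead_monoms enc (C (Suc i)) \<and> m \<notin> lead_monoms enc (C i)" for i
    using ideal_subset_if_lead_monoms_subset[OF ideals ideals, of i "Suc i"] strict[of i] by blast
  then obtain ms where ms: "\<And>i. ms i \<in> lead_monoms enc (C (Suc i)) \<and> ms i \<notin> lead_monoms enc (C i)"
    by metis
  obtain i j where "i < j" and le: "Poly_Mapping.lookup (ms i) \<le> Poly_Mapping.lookup (ms j)"
    by (rule dickson)
  have "C (Suc i) \<subseteq> C j"
    using lift_Suc_mono_le[of C, OF _ Suc_leI[OF \<open>i < j\<close>]] strict by blast
  then have "ms i \<in> lead_monoms enc (C j)" using ms[of i] lead_monoms_mono by blast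
  then have "ms j \<in> lead_monoms enc (C j)"
    using lead_monoms_upward_closed[OF ideals] le by (metis le_funD)
  then show False using ms[of j] by blast
qed

end

theorem noetherian_ring_mpoly: "noetherian_ring TYPE(('n::finite, 'a::field) mpoly)"
proof (rule noetherian_ringI_no_ascending_chain)
  obtain enc :: "'n \<Rightarrow> nat" where "inj enc"
    using finite_imp_inj_to_nat_seg[of "UNIV :: 'n set"] by auto
  then show "\<And>C :: nat \<Rightarrow> ('n, 'a) mpoly set. (\<And>i. is_ideal (C i)) \<Longrightarrow> (\<And>i. C i \<subset> C (Suc i)) \<Longrightarrow> False"
    by (rule no_ascending_ideal_chain)
qed

theorem theorem2p5:
  fixes a :: "'n::finite \<Rightarrow> nat"
    and I J :: "('n, 'a::field_char_0) mpoly set"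
    and k :: nat
  assumes "\<forall>i. a i > 0"
    and "homogeneous_ideal a I"
    and "k \<ge> 2"
    and "ideal_pow (symbolic_power I (k - 1)) 2 \<subseteq> ideal_pow I k"
    and "homogeneous_ideal a J"
    and "ideal_pow I k \<subseteq> J"
    and "J \<subseteq> symbolic_power I k"
  shows "strongly_golod J"
proof -
  have I: "is_ideal I" using assms(2) unfolding homogeneous_ideal_def by simp
  have "pderiv_var i f \<in> symbolic_power I (k - 1)" if "f \<in> J" for i f
  proof (rule derivation_symbolic_power[OF noetherian_ring_mpoly derivation_pderiv_var I])
    show "f \<in> symbolic_power I (Suc (k - 1))" using that assms(3,7) by (simp add: subset_iff)
  qed
  then have "deriv_ideal J \<subseteq> symbolic_power I (k - 1)"
    unfolding deriv_ideal_def by (intro ideal_gen_least[OF is_ideal_symbolic_power[OF I]]) blast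
  then have "ideal_pow (deriv_ideal J) 2 \<subseteq> ideal_pow (symbolic_power I (k - 1)) 2"
    by (rule ideal_pow_mono)
  then show ?thesis unfolding strongly_golod_def using assms(4,6) by blast
qed

end
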